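(* Let $\alpha\neq 0$, $\beta,\gamma$ be real numbers and $\lambda$ a nonnegative integer. For all nonnegative integers $n$, $$\mathcal{E}_{n}^{(\lambda)}(\alpha,\beta,\gamma)=\sum_{k=0}^{n}S(n,k,\alpha,\beta,\gamma)\binom{k+\lambda-1}{k}k!\frac{(-\beta)^{k}}{2^{k}}$$ and $$\mathcal{E}_{n}^{(\lambda)}(\alpha,\beta,\gamma)=\sum_{k=0}^{n}S(n,k,\alpha,-\beta,\gamma-\beta\lambda)\binom{k+\lambda-1}{k}k!\frac{\beta^{k}}{2^{k}}.$$
   Context: For a number $t$ and $\alpha$, the generalised factorial is $(t|\alpha)_n=\prod_{j=0}^{n-1}(t-j\alpha)$ for $n\ge 1$ and $(t|\alpha)_0=1$. For parameters $\alpha,\beta,\gamma$, the generalised Stirling numbers $S(n,k,\alpha,\beta,\gamma)$ ($0\le k\le n$) are defined by the polynomial identity $(t|\alpha)_n=\sum_{k=0}^{n}S(n,k,\alpha,\beta,\gamma)\,(t-\gamma|\beta)_k$ in the variable $t$. For a nonnegative integer $\lambda$ put $\binom{k+\lambda-1}{k}=\lambda(\lambda+1)\cdots(\lambda+k-1)/k!$ (equal to $1$ for $k=0$). The higher order generalised Euler polynomials $\mathcal{E}_n^{(\lambda)}(\alpha,\beta,x)$ are defined by the formal power series identity $$\left[\frac{2}{(1+\alpha t)^{\beta/\alpha}+1}\right]^{\lambda}(1+\alpha t)^{x/\alpha}=\sum_{n=0}^{\infty}\mathcal{E}_{n}^{(\lambda)}(\alpha,\beta,x)\frac{t^{n}}{n!},$$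 where $(1+\alpha t)^{c}=\sum_{j\ge0}\binom{c}{j}\alpha^jt^j$. *)

theory Defs
  imports Complex_Main "HOL-Computational_Algebra.Formal_Power_Series"
begin

definition gen_fact :: "real \<Rightarrow> real \<Rightarrow> nat \<Rightarrow> real" where
  "gen_fact t a n = (\<Prod>j<n. t - real j * a)"

definition gen_stirling :: "nat \<Rightarrow> nat \<Rightarrow> real \<Rightarrow> real \<Rightarrow> real \<Rightarrow> real" where
  "gen_stirling n k a b g =
     (THE c :: nat \<Rightarrow> real. (\<forall>t. gen_fact t a n = (\<Sum>i\<le>n. c i * gen_fact (t - g) b i))
                          \<and> (\<forall>i>n. c i = 0)) k"

text \<open>Rising binomial (k+lam-1 choose k) = lam(lam+1)...(lam+k-1)/k!.\<close>
definition rbinom :: "nat \<Rightarrow> nat \<Rightarrow> real" where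
  "rbinom lam k = pochhammer (real lam) k / fact k"

text \<open>(1 + a t)^c as a formal power series: sum_j (c choose j) a^j t^j.\<close>
definition binom_fps :: "real \<Rightarrow> real \<Rightarrow> real fps" where
  "binom_fps a c = Abs_fps (\<lambda>j. (c gchoose j) * a ^ j)"

definition gen_euler :: "nat \<Rightarrow> nat \<Rightarrow> real \<Rightarrow> real \<Rightarrow> real \<Rightarrow> real" where
  "gen_euler n lam a b x =
     fact n * fps_nth ((fps_const 2 * inverse (binom_fps a (b / a) + 1)) ^ lam
                        * binom_fps a (x / a)) n"

end

theory Submission
  imports Defs "HOL-Computational_Algebra.Polynomial"
begin

(* Write B_c for the series (1 + \<alpha> t)^(c/\<alpha>), so that B_c B_d = B_(c+d) and
   (1 + \<alpha> t) B_c' = c B_c.  Putting W = (B_\<beta> - 1)/2, the generating function is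
   (1 + W)^(-\<lambda>) B_\<gamma> = \<Sum>k (-\<lambda> choose k) W^k B_\<gamma>, and the differential equation shows
   that the coefficients n! [t^n] (B_\<beta> - 1)^k B_\<gamma> / (k! \<beta>^k) satisfy the triangular
   recurrence of the Stirling numbers S(n,k,\<alpha>,\<beta>,\<gamma>); this is the first formula.
   The second follows from the first because 2/(B_\<beta> + 1) = B_(-\<beta>) 2/(B_(-\<beta>) + 1),
   which turns the parameters (\<beta>, \<gamma>) into (-\<beta>, \<gamma> - \<beta>\<lambda>). *)

unbundle fps_syntax

lemma fps_binomial_ODE: "(1 + fps_X) * fps_deriv (fps_binomial c) = fps_const c * fps_binomial c"
  by (simp add: fps_binomial_deriv)

lemma fps_nth_lin_mult_deriv:
  fixes h :: "'a::comm_ring_1 fps"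
  shows "((1 + fps_const a * fps_X) * fps_deriv h) $ n
           = of_nat (Suc n) * h $ Suc n + a * of_nat n * h $ n"
  by (cases n) (simp_all add: distrib_right mult.assoc algebra_simps)

lemma fps_compose_mult_nth:
  fixes a b c :: "'a::comm_ring_1 fps"
  assumes "b $ 0 = 0"
  shows "((a oo b) * c) $ n = (\<Sum>i\<le>n. a $ i * (b ^ i * c) $ n)"
proof -
  have vanish: "(b ^ i) $ j = 0" if "j < i" for i j
    using startsby_zero_power_prefix[OF assms] that by blast
  have "((a oo b) * c) $ n = (\<Sum>j\<le>n. \<Sum>i\<le>j. a $ i * (b ^ i) $ j * c $ (n - j))"
    by (simp add: fps_mult_nth fps_compose_nth atLeast0AtMost sum_distrib_right)
  also have "\<dots> = (\<Sum>j\<le>n. \<Sum>i\<le>n. a $ i * (b ^ i) $ j * c $ (n - j))"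
    by (intro sum.cong refl sum.mono_neutral_left) (auto simp: vanish)
  also have "\<dots> = (\<Sum>i\<le>n. a $ i * (b ^ i * c) $ n)"
    by (subst sum.swap) (simp add: fps_mult_nth atLeast0AtMost sum_distrib_left mult.assoc)
  finally show ?thesis .
qed

lemma fps_inverse_one_plus_power_eq_compose:
  fixes w :: "'a::field_char_0 fps"
  assumes "w $ 0 = 0"
  shows "inverse (1 + w) ^ m = fps_binomial (- of_nat m) oo w"
proof -
  have "fps_binomial (- of_nat m) oo w = inverse ((1 + fps_X) ^ m) oo w"
    by (simp add: fps_binomial_minus_of_nat)
  also have "\<dots> = inverse ((1 + fps_X) ^ m oo w)"
    by (rule fps_inverse_compose) (simp_all add: assms)
  also have "\<dots> = inverse ((1 + w) ^ m)"
    by (simp add: assms fps_compose_add_distrib flip: fps_compose_power[OF assms])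
  finally show ?thesis
    by (simp add: fps_inverse_power)
qed

lemma fps_two_inverse_plus_one:
  fixes B :: "'a::field_char_0 fps"
  shows "fps_const 2 * inverse (B + 1) = inverse (1 + fps_const (1 / 2) * (B - 1))"
proof -
  have half: "fps_const 2 * fps_const (1 / 2) = (1 :: 'a fps)"
    by (simp only: fps_const_mult) simp
  have "B + 1 = fps_const 2 * (1 + fps_const (1 / 2) * (B - 1))"
    by (simp add: distrib_left right_diff_distrib mult.assoc[symmetric] half numeral_fps_const)
  then show ?thesis
    by (simp add: fps_inverse_mult fps_const_inverse mult.assoc[symmetric] half)
qed

lemma binom_fps_eq_compose: "binom_fps a c = fps_binomial c oo (fps_const a * fps_X)"
  unfolding fps_compose_linear by (simp add: binom_fps_def mult.commute)

lemma binom_fps_nth_0 [simp]: "binom_fps a c $ 0 = 1"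
  by (simp add: binom_fps_def)

lemma binom_fps_0 [simp]: "binom_fps a 0 = 1"
  by (simp add: binom_fps_eq_compose)

lemma binom_fps_add: "binom_fps a (c + d) = binom_fps a c * binom_fps a d"
  by (simp add: binom_fps_eq_compose fps_binomial_add_mult fps_compose_mult_distrib)

lemma binom_fps_minus: "binom_fps a c * binom_fps a (- c) = 1"
  by (simp flip: binom_fps_add)

lemma binom_fps_power: "binom_fps a c ^ m = binom_fps a (real m * c)"
  by (simp add: binom_fps_eq_compose fps_compose_power fps_binomial_power)

lemma binom_fps_ODE:
  "(1 + fps_const a * fps_X) * fps_deriv (binom_fps a c) = fps_const (a * c) * binom_fps a c"
proof -
  let ?aX = "fps_const a * fps_X :: real fps"
  have "(1 + ?aX) * fps_deriv (binom_fps a c)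
      = fps_const a * (((1 + fps_X) * fps_deriv (fps_binomial c)) oo ?aX)"
    by (simp add: binom_fps_eq_compose fps_compose_deriv fps_compose_mult_distrib
        fps_compose_add_distrib algebra_simps)
  also have "\<dots> = fps_const (a * c) * binom_fps a c"
    by (simp add: fps_binomial_ODE fps_compose_mult_distrib binom_fps_eq_compose)
  finally show ?thesis .
qed

lemma gen_fact_Suc: "gen_fact t a (Suc n) = gen_fact t a n * (t - real n * a)"
  by (simp add: gen_fact_def)

definition gen_fact_poly :: "real \<Rightarrow> real \<Rightarrow> nat \<Rightarrow> real poly" where
  "gen_fact_poly s b i = (\<Prod>j<i. [:- (s + real j * b), 1:])"

lemma poly_gen_fact_poly: "poly (gen_fact_poly s b i) t = gen_fact (t - s) b i"
  by (simp add: gen_fact_poly_def gen_fact_def poly_prod algebra_simps)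

lemma degree_gen_fact_poly: "degree (gen_fact_poly s b i) = i"
  by (simp add: gen_fact_poly_def degree_prod_eq_sum_degree)

lemma lead_coeff_gen_fact_poly: "lead_coeff (gen_fact_poly s b i) = 1"
  by (simp add: gen_fact_poly_def lead_coeff_prod)

lemma sum_smult_monic_eq_0D:
  fixes p :: "nat \<Rightarrow> 'a::comm_ring_1 poly"
  assumes "\<And>i. degree (p i) = i" and "\<And>i. lead_coeff (p i) = 1"
    and "(\<Sum>i\<le>n. smult (e i) (p i)) = 0" and "i \<le> n"
  shows "e i = 0"
  using assms(3,4)
proof (induction n arbitrary: i)
  case 0
  then have "coeff (smult (e 0) (p 0)) (degree (p 0)) = 0"
    by simp
  then show ?case
    using 0 assms(2)[of 0] by simp
next
  case (Suc n)
  have low: "coeff (p i) (Suc n) = 0" if "i \<le> n" for i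
    using that assms(1)[of i] by (simp add: coeff_eq_0)
  have "e (Suc n) = coeff (\<Sum>i\<le>Suc n. smult (e i) (p i)) (Suc n)"
    using assms(1,2)[of "Suc n"] by (simp add: coeff_sum low)
  then have top: "e (Suc n) = 0"
    by (metis Suc.prems(1) coeff_0)
  then have "(\<Sum>i\<le>n. smult (e i) (p i)) = 0"
    using Suc.prems by simp
  then show ?case
    using Suc.IH top Suc.prems(2) le_Suc_eq by blast
qed

lemma gen_fact_expansion_unique:
  assumes "\<And>t. (\<Sum>i\<le>n. c i * gen_fact (t - g) b i) = (\<Sum>i\<le>n. d i * gen_fact (t - g) b i)"
    and "i \<le> n"
  shows "c i = d i"
proof -
  let ?P = "\<lambda>e. \<Sum>i\<le>n. smult (e i) (gen_fact_poly g b i)"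
  have "poly (?P c - ?P d) = poly 0"
    using assms(1) by (simp add: poly_sum poly_gen_fact_poly fun_eq_iff)
  then have "(\<Sum>i\<le>n. smult (c i - d i) (gen_fact_poly g b i)) = 0"
    by (simp add: poly_eq_poly_eq_iff smult_diff_left sum_subtractf)
  then show ?thesis
    using sum_smult_monic_eq_0D[OF degree_gen_fact_poly lead_coeff_gen_fact_poly _ assms(2),
        where e = "\<lambda>i. c i - d i"] by simp
qed

fun gen_stirling_rec :: "real \<Rightarrow> real \<Rightarrow> real \<Rightarrow> nat \<Rightarrow> nat \<Rightarrow> real" where
  "gen_stirling_rec a b g 0 k = (if k = 0 then 1 else 0)"
| "gen_stirling_rec a b g (Suc n) k =
     (if k = 0 then 0 else gen_stirling_rec a b g n (k - 1))
     + (real k * b + g - real n * a) * gen_stirling_rec a b g n k"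

lemma gen_stirling_rec_eq_0: "n < k \<Longrightarrow> gen_stirling_rec a b g n k = 0"
  by (induction n arbitrary: k) auto

lemma gen_fact_expansion:
  "gen_fact t a n = (\<Sum>k\<le>n. gen_stirling_rec a b g n k * gen_fact (t - g) b k)"
proof (induction n)
  case 0
  then show ?case by (simp add: gen_fact_def)
next
  case (Suc n)
  let ?G = "gen_fact (t - g) b" and ?s = "gen_stirling_rec a b g n"
  let ?c = "\<lambda>k. real k * b + g - real n * a"
  have shift: "?G k * (t - real n * a) = ?G (Suc k) + ?c k * ?G k" for k
    by (simp add: gen_fact_Suc algebra_simps)
  have "gen_fact t a (Suc n) = (\<Sum>k\<le>n. ?s k * (?G k * (t - real n * a)))"
    by (simp add: Suc gen_fact_Suc sum_distrib_right mult.assoc)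
  also have "\<dots> = (\<Sum>k\<le>n. ?s k * ?G (Suc k)) + (\<Sum>k\<le>n. ?c k * ?s k * ?G k)"
    by (simp only: shift sum.distrib[symmetric]) (simp add: algebra_simps)
  also have "(\<Sum>k\<le>n. ?s k * ?G (Suc k)) = (\<Sum>k\<le>Suc n. (if k = 0 then 0 else ?s (k - 1)) * ?G k)"
    by (subst sum.atMost_Suc_shift) simp
  also have "(\<Sum>k\<le>n. ?c k * ?s k * ?G k) = (\<Sum>k\<le>Suc n. ?c k * ?s k * ?G k)"
    by (simp add: gen_stirling_rec_eq_0)
  finally show ?case
    by (simp add: sum.distrib[symmetric] algebra_simps)
qed

lemma gen_stirling_eq_rec: "gen_stirling n k a b g = gen_stirling_rec a b g n k"
proof -
  have "(THE c. (\<forall>t. gen_fact t a n = (\<Sum>i\<le>n. c i * gen_fact (t - g) b i)) \<and> (\<forall>i>n. c i = 0))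
        = gen_stirling_rec a b g n"
  proof (rule the_equality)
    fix c assume c: "(\<forall>t. gen_fact t a n = (\<Sum>i\<le>n. c i * gen_fact (t - g) b i)) \<and> (\<forall>i>n. c i = 0)"
    show "c = gen_stirling_rec a b g n"
    proof
      fix i
      show "c i = gen_stirling_rec a b g n i"
      proof (cases "i \<le> n")
        case True
        show ?thesis
          by (rule gen_fact_expansion_unique[OF _ True, where g = g and b = b])
            (use c in \<open>simp add: gen_fact_expansion[symmetric]\<close>)
      qed (use c gen_stirling_rec_eq_0 in auto)
    qed
  qed (use gen_fact_expansion gen_stirling_rec_eq_0 in auto)
  then show ?thesis
    by (simp add: gen_stirling_def)
qed

lemma binom_fps_power_minus_one_ODE:
  fixes a b g :: real
  assumes "a \<noteq> 0"
  defines "u \<equiv> binom_fps a (b / a) - 1" and "v \<equiv> binom_fps a (g / a)"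
  shows "(1 + fps_const a * fps_X) * fps_deriv (u ^ k * v)
           = fps_const (real k * b + g) * (u ^ k * v) + fps_const (real k * b) * (u ^ (k - 1) * v)"
proof -
  let ?L = "1 + fps_const a * fps_X :: real fps"
  have du: "?L * fps_deriv u = fps_const b * (u + 1)"
    using binom_fps_ODE[of a "b / a"] assms(1) by (simp add: u_def)
  have dv: "?L * fps_deriv v = fps_const g * v"
    using binom_fps_ODE[of a "g / a"] assms(1) by (simp add: v_def)
  have "?L * fps_deriv (u ^ k * v)
      = fps_const (real k) * (?L * fps_deriv u) * u ^ (k - 1) * v + u ^ k * (?L * fps_deriv v)"
    by (simp add: fps_deriv_power algebra_simps)
  also have "\<dots> = fps_const (real k * b) * (u ^ (k - 1) * (u + 1)) * v + fps_const g * (u ^ k * v)"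
    by (simp only: du dv) (simp add: algebra_simps)
  also have "\<dots> = fps_const (real k * b + g) * (u ^ k * v) + fps_const (real k * b) * (u ^ (k - 1) * v)"
    by (cases k) (simp_all add: algebra_simps flip: fps_const_add)
  finally show ?thesis .
qed

lemma gen_stirling_rec_egf:
  assumes "a \<noteq> 0"
  shows "fact n * ((binom_fps a (b / a) - 1) ^ k * binom_fps a (g / a)) $ n
           = fact k * b ^ k * gen_stirling_rec a b g n k"
proof (induction n arbitrary: k)
  case 0
  then show ?case by (cases k) simp_all
next
  case (Suc n)
  define f where "f k = (binom_fps a (b / a) - 1) ^ k * binom_fps a (g / a)" for k
  have "((1 + fps_const a * fps_X) * fps_deriv (f k)) $ n
      = (fps_const (real k * b + g) * f k + fps_const (real k * b) * f (k - 1)) $ n"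
    by (simp only: f_def binom_fps_power_minus_one_ODE[OF assms])
  then have rec: "real (Suc n) * f k $ Suc n
      = (real k * b + g - real n * a) * f k $ n + real k * b * f (k - 1) $ n"
    unfolding fps_nth_lin_mult_deriv fps_add_nth fps_mult_left_const_nth by (simp add: algebra_simps)
  have "fact (Suc n) * f k $ Suc n = fact n * (real (Suc n) * f k $ Suc n)"
    by simp
  also have "\<dots> = (real k * b + g - real n * a) * (fact n * f k $ n)
                    + real k * b * (fact n * f (k - 1) $ n)"
    by (simp only: rec) (simp add: algebra_simps)
  also have "\<dots> = fact k * b ^ k * gen_stirling_rec a b g (Suc n) k"
    using Suc.IH[unfolded f_def[symmetric]] by (cases k) (simp_all add: algebra_simps)
  finally show ?case
    by (simp add: f_def)
qed

lemma gbinomial_minus_of_nat_eq_rbinom: "(- real lam) gchoose k = (- 1) ^ k * rbinom lam k"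
  by (simp add: gbinomial_pochhammer rbinom_def)

lemma gen_euler_eq_sum_gen_stirling:
  assumes "a \<noteq> 0"
  shows "gen_euler n lam a b g
           = (\<Sum>k\<le>n. gen_stirling n k a b g * rbinom lam k * fact k * (- b) ^ k / 2 ^ k)"
proof -
  define u where "u = binom_fps a (b / a) - 1"
  define v where "v = binom_fps a (g / a)"
  define w where "w = fps_const (1 / 2) * u"
  have w0: "w $ 0 = 0"
    by (simp add: w_def u_def)
  have "gen_euler n lam a b g = fact n * ((fps_binomial (- real lam) oo w) * v) $ n"
    using fps_inverse_one_plus_power_eq_compose[OF w0, of lam]
    by (simp add: gen_euler_def fps_two_inverse_plus_one w_def u_def v_def)
  also have "\<dots> = (\<Sum>k\<le>n. ((- real lam) gchoose k) * (fact n * (w ^ k * v) $ n))"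
    by (simp only: fps_compose_mult_nth[OF w0] sum_distrib_left fps_binomial_nth mult.left_commute)
  also have "\<dots> = (\<Sum>k\<le>n. gen_stirling n k a b g * rbinom lam k * fact k * (- b) ^ k / 2 ^ k)"
  proof (intro sum.cong refl)
    fix k
    have "(w ^ k * v) $ n = (1 / 2) ^ k * (u ^ k * v) $ n"
      by (simp only: w_def power_mult_distrib fps_const_power mult.assoc fps_mult_left_const_nth)
    then have "fact n * (w ^ k * v) $ n
        = (1 / 2) ^ k * (fact k * b ^ k * gen_stirling_rec a b g n k)"
      by (simp only: mult.left_commute[of "fact n"] u_def v_def gen_stirling_rec_egf[OF assms])
    then show "((- real lam) gchoose k) * (fact n * (w ^ k * v) $ n)
        = gen_stirling n k a b g * rbinom lam k * fact k * (- b) ^ k / 2 ^ k"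
      by (simp add: gen_stirling_eq_rec gbinomial_minus_of_nat_eq_rbinom power_minus' power_divide)
  qed
  finally show ?thesis .
qed

lemma gen_euler_reflect:
  assumes "a \<noteq> 0"
  shows "gen_euler n lam a b g = gen_euler n lam a (- b) (g - b * real lam)"
proof -
  define B where "B = binom_fps a (b / a)"
  define B' where "B' = binom_fps a (- b / a)"
  have "B * B' = 1"
    using binom_fps_minus[of a "b / a"] by (simp add: B_def B'_def)
  then have "B + 1 = B * (B' + 1)" and "inverse B = B'"
    by (simp_all add: algebra_simps fps_inverse_unique)
  then have swap: "inverse (B + 1) = B' * inverse (B' + 1)"
    by (simp add: fps_inverse_mult)
  have shift: "B' ^ lam * binom_fps a (g / a) = binom_fps a ((g - b * real lam) / a)"
    by (simp add: B'_def binom_fps_power flip: binom_fps_add)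
      (simp add: diff_divide_distrib mult.commute)
  have "(fps_const 2 * inverse (B + 1)) ^ lam * binom_fps a (g / a)
      = (fps_const 2 * inverse (B' + 1)) ^ lam * binom_fps a ((g - b * real lam) / a)"
    by (simp add: swap power_mult_distrib mult_ac flip: shift)
  then show ?thesis
    by (simp add: gen_euler_def B_def B'_def)
qed

theorem mainTheorem11:
  fixes \<alpha> \<beta> \<gamma> :: real and lam n :: nat
  assumes "\<alpha> \<noteq> 0"
  shows "gen_euler n lam \<alpha> \<beta> \<gamma> =
           (\<Sum>k\<le>n. gen_stirling n k \<alpha> \<beta> \<gamma> * rbinom lam k * fact k * (- \<beta>) ^ k / 2 ^ k)
       \<and> gen_euler n lam \<alpha> \<beta> \<gamma> =
           (\<Sum>k\<le>n. gen_stirling n k \<alpha> (- \<beta>) (\<gamma> - \<beta> * real lam) * rbinom lam k * fact k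
                    * \<beta> ^ k / 2 ^ k)"
  using gen_euler_eq_sum_gen_stirling[OF assms, of n lam \<beta> \<gamma>]
    gen_euler_eq_sum_gen_stirling[OF assms, of n lam "- \<beta>" "\<gamma> - \<beta> * real lam"]
    gen_euler_reflect[OF assms, of n lam \<beta> \<gamma>]
  by simp

end
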